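(* Let $\mathcal I=(i_-,i_+)\subseteq\mathbb R$ and let $X$ be a random variable with an absolutely continuous density $f$ satisfying $f(x)>0$ for $x\in\mathcal I$. Let $F(x)=\int_{i_-}^x f(y)\,dy$, let $\bar x$ be the median ($F(\bar x)=1/2$), and define $$K(x)=\frac{F(x)}{f(x)}\ \text{ if } x\le\bar x,\qquad K(x)=\frac{1-F(x)}{f(x)}\ \text{ if } x\ge \bar x .$$ Then for every $1\le p<\infty$ and every smooth $\phi$ on $\mathcal I$ with $E[|\phi(X)|^p]<\infty$, $$E\big[|\phi(X)-E(\phi(X))|^p\big]\le (2p)^p\,E\big[K(X)^p|\phi'(X)|^p\big].$$ *)

theory Defs
  imports "HOL-Probability.Probability"
begin

definition abs_cont_on :: "(real \<Rightarrow> real) \<Rightarrow> real set \<Rightarrow> bool" where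
  "abs_cont_on f S \<longleftrightarrow>
     (\<forall>\<epsilon>>0. \<exists>\<delta>>0. \<forall>(n::nat) (l::nat \<Rightarrow> real) (r::nat \<Rightarrow> real).
        (\<forall>k<n. l k \<le> r k \<and> {l k..r k} \<subseteq> S) \<and>
        (\<forall>j<n. \<forall>k<n. j \<noteq> k \<longrightarrow> r j \<le> l k \<or> r k \<le> l j) \<and>
        (\<Sum>k<n. r k - l k) < \<delta>
        \<longrightarrow> (\<Sum>k<n. \<bar>f (r k) - f (l k)\<bar>) < \<epsilon>)"

definition smooth_on :: "(real \<Rightarrow> real) \<Rightarrow> real set \<Rightarrow> bool" where
  "smooth_on \<phi> S \<longleftrightarrow> (\<forall>n. \<forall>x\<in>S. ((deriv ^^ n) \<phi>) differentiable (at x))"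

definition cdf_of :: "ereal \<Rightarrow> (real \<Rightarrow> real) \<Rightarrow> real \<Rightarrow> real" where
  "cdf_of a f x = (LBINT y=a..ereal x. f y)"

definition K_weight :: "ereal \<Rightarrow> (real \<Rightarrow> real) \<Rightarrow> real \<Rightarrow> real \<Rightarrow> real" where
  "K_weight a f xbar x =
     (if x \<le> xbar then cdf_of a f x / f x else (1 - cdf_of a f x) / f x)"

end

theory Submission
  imports Defs
begin

(* Fix a split point s and write u = phi - phi(s). To the right of s let H = 1 - F, so that
   H' = -f and H >= 0. For e > 0 the function G(x) = e + int_s^x |u'| dominates |u|, and by
   Young's inequality
     Psi(x) = 1/p int_s^x f G^p - p^(p-1) int_s^x f (H/f)^p |u'|^p + H(x) G(x)^p
   is nonincreasing; letting e -> 0 gives int_s^y f |u|^p <= p^p int_s^y f (H/f)^p |u'|^p.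
   Exhausting the right half of the interval, and the left half by the reflection x -> -x with
   H = F, gives E|phi(X) - phi(s)|^p <= p^p E[K(X)^p |phi'(X)|^p]. Replacing phi(s) by the mean
   costs a factor 2^p, by convexity of |t|^p and Jensen's inequality. *)

section \<open>A weighted Hardy inequality on compact intervals\<close>

lemma Young_powr_weighted:
  fixes w H g h p :: real
  assumes "0 < w" "0 \<le> H" "0 < g" "0 \<le> h" "1 \<le> p"
  shows "H * (p * g powr (p - 1) * h)
         \<le> (p - 1) / p * (w * g powr p) + p powr (p - 1) * (w * ((H / w) powr p * h powr p))"
proof (cases "p = 1 \<or> H = 0 \<or> h = 0")
  case True
  then show ?thesis
    using assms by (auto intro!: add_nonneg_nonneg mult_nonneg_nonneg)
next
  case False
  then have p: "p > 1" and "H > 0" "h > 0" using assms by auto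
  define r where "r = H / w"
  have r: "r > 0" "H = w * r" using \<open>H > 0\<close> assms by (auto simp: r_def)
  define A where "A = w * (p * r * h) powr p"
  define B where "B = w * g powr p"
  have "A powr (1/p) * B powr ((p - 1) / p) \<le> (1/p) * A + ((p - 1) / p) * B"
    using Youngs_inequality_0[of "1/p" "(p - 1)/p" A B] p r \<open>h > 0\<close> assms
    by (simp add: A_def B_def field_simps)
  moreover have "A powr (1/p) * B powr ((p - 1) / p) = w powr (1/p) * w powr ((p - 1) / p) * (p * r * h * g powr (p - 1))"
    using assms r \<open>h > 0\<close> p by (simp add: A_def B_def powr_mult powr_powr)
  moreover have "w powr (1/p) * w powr ((p - 1) / p) = w"
    using assms p by (simp add: powr_add[symmetric] add_divide_distrib[symmetric])
  moreover have "(1/p) * A = p powr (p - 1) * (w * (r powr p * h powr p))"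
    using assms r \<open>h > 0\<close> p by (simp add: A_def powr_mult powr_diff field_simps)
  ultimately show ?thesis
    by (simp add: r B_def algebra_simps)
qed

lemma abs_diff_le_integral_abs_deriv:
  fixes u u' :: "real \<Rightarrow> real"
  assumes "s \<le> x"
    and "\<And>t. t \<in> {s..x} \<Longrightarrow> (u has_real_derivative u' t) (at t within {s..x})"
    and "continuous_on {s..x} u'"
  shows "\<bar>u x - u s\<bar> \<le> integral {s..x} (\<lambda>t. \<bar>u' t\<bar>)"
proof -
  have "(u' has_integral (u x - u s)) {s..x}"
    using assms by (intro fundamental_theorem_of_calculus)
      (auto simp: has_real_derivative_iff_has_vector_derivative[symmetric])
  then have "\<bar>u x - u s\<bar> = norm (integral {s..x} u')"
    by (simp add: has_integral_iff)
  also have "\<dots> \<le> integral {s..x} (\<lambda>t. \<bar>u' t\<bar>)"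
    using assms(3)
    by (intro integral_norm_bound_integral integrable_continuous_interval continuous_intros) auto
  finally show ?thesis .
qed

lemma continuous_on_Hardy_weight:
  fixes f H g :: "real \<Rightarrow> real"
  assumes "continuous_on S f" "\<And>x. x \<in> S \<Longrightarrow> 0 < f x"
    and "continuous_on S H" "\<And>x. x \<in> S \<Longrightarrow> 0 \<le> H x"
    and "continuous_on S g" "\<And>x. x \<in> S \<Longrightarrow> 0 \<le> g x" and "0 < p"
  shows "continuous_on S (\<lambda>x. f x * ((H x / f x) powr p * g x powr p))"
  using assms
  by (intro continuous_intros continuous_on_powr') (auto, (force dest: assms(2))+)

lemma Hardy_Icc_offset:
  fixes f H G g :: "real \<Rightarrow> real" and s y p :: real
  assumes "s \<le> y" and p: "1 \<le> p"
    and cont_f: "continuous_on {s..y} f" and f_pos: "\<And>x. x \<in> {s..y} \<Longrightarrow> 0 < f x"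
    and H_deriv: "\<And>x. x \<in> {s..y} \<Longrightarrow> (H has_real_derivative - f x) (at x within {s..y})"
    and H_nonneg: "\<And>x. x \<in> {s..y} \<Longrightarrow> 0 \<le> H x"
    and G_deriv: "\<And>x. x \<in> {s..y} \<Longrightarrow> (G has_real_derivative g x) (at x within {s..y})"
    and G_pos: "\<And>x. x \<in> {s..y} \<Longrightarrow> 0 < G x"
    and g_nonneg: "\<And>x. x \<in> {s..y} \<Longrightarrow> 0 \<le> g x" and cont_g: "continuous_on {s..y} g"
  shows "integral {s..y} (\<lambda>x. f x * G x powr p)
         \<le> p powr p * integral {s..y} (\<lambda>x. f x * ((H x / f x) powr p * g x powr p))
           + p * H s * G s powr p"
proof -
  define A where "A x = f x * G x powr p" for x
  define B where "B x = f x * ((H x / f x) powr p * g x powr p)" for x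
  have cont_H: "continuous_on {s..y} H"
    by (rule DERIV_continuous_on[OF H_deriv])
  have cont_G: "continuous_on {s..y} G"
    by (rule DERIV_continuous_on[OF G_deriv])
  have cont_A: "continuous_on {s..y} A"
    unfolding A_def using G_pos p
    by (intro continuous_intros cont_f cont_G continuous_on_powr') (auto, force)
  have cont_B: "continuous_on {s..y} B"
    unfolding B_def using p
    by (intro continuous_on_Hardy_weight cont_f f_pos cont_H H_nonneg cont_g g_nonneg) auto
  \<comment> \<open>A Lyapunov function, nonincreasing by Young's inequality.\<close>
  define \<Psi> where "\<Psi> x = integral {s..x} A / p - p powr (p - 1) * integral {s..x} B + H x * G x powr p" for x
  define \<Psi>' where "\<Psi>' x = A x / p - p powr (p - 1) * B x + (- f x * G x powr p + p * G x powr (p - 1) * g x * H x)" for x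
  have "(\<Psi> has_real_derivative \<Psi>' x) (at x within {s..y})" if x: "x \<in> {s..y}" for x
  proof -
    have "((\<lambda>x. integral {s..x} A) has_real_derivative A x) (at x within {s..y})"
      and "((\<lambda>x. integral {s..x} B) has_real_derivative B x) (at x within {s..y})"
      using integral_has_vector_derivative[OF cont_A x] integral_has_vector_derivative[OF cont_B x]
      by (simp_all add: has_real_derivative_iff_has_vector_derivative)
    moreover have "((\<lambda>x. G x powr p) has_real_derivative p * G x powr (p - 1) * g x) (at x within {s..y})"
      by (rule DERIV_chain2[OF has_real_derivative_powr[OF G_pos[OF x]] G_deriv[OF x]])
    ultimately show ?thesis
      unfolding \<Psi>_def \<Psi>'_def
      by (intro DERIV_add DERIV_diff DERIV_cdivide DERIV_cmult DERIV_mult H_deriv x)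
  qed
  then have "(\<Psi>' has_integral (\<Psi> y - \<Psi> s)) {s..y}"
    using \<open>s \<le> y\<close> by (intro fundamental_theorem_of_calculus)
      (auto simp: has_real_derivative_iff_has_vector_derivative[symmetric])
  moreover have "\<Psi>' x \<le> 0" if x: "x \<in> {s..y}" for x
    using Young_powr_weighted[OF f_pos[OF x] H_nonneg[OF x] G_pos[OF x] g_nonneg[OF x] p] p
    by (simp add: \<Psi>'_def A_def B_def field_simps)
  ultimately have "\<Psi> y - \<Psi> s \<le> 0"
    using has_integral_le[OF _ has_integral_0] by blast
  moreover have "0 \<le> H y * G y powr p"
    using H_nonneg \<open>s \<le> y\<close> by simp
  ultimately have "integral {s..y} A / p \<le> p powr (p - 1) * integral {s..y} B + H s * G s powr p"
    by (simp add: \<Psi>_def)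
  then have "integral {s..y} A \<le> p * (p powr (p - 1) * integral {s..y} B + H s * G s powr p)"
    using p by (simp add: field_simps)
  then show ?thesis
    using p unfolding A_def[abs_def] B_def[abs_def] by (simp add: algebra_simps powr_diff)
qed

lemma Hardy_Icc:
  fixes f H u u' :: "real \<Rightarrow> real" and s y p :: real
  assumes "s \<le> y" and p: "1 \<le> p"
    and cont_f: "continuous_on {s..y} f" and f_pos: "\<And>x. x \<in> {s..y} \<Longrightarrow> 0 < f x"
    and H_deriv: "\<And>x. x \<in> {s..y} \<Longrightarrow> (H has_real_derivative - f x) (at x within {s..y})"
    and H_nonneg: "\<And>x. x \<in> {s..y} \<Longrightarrow> 0 \<le> H x"
    and u_deriv: "\<And>x. x \<in> {s..y} \<Longrightarrow> (u has_real_derivative u' x) (at x within {s..y})"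
    and cont_u': "continuous_on {s..y} u'"
  shows "integral {s..y} (\<lambda>x. f x * \<bar>u x - u s\<bar> powr p)
         \<le> p powr p * integral {s..y} (\<lambda>x. f x * ((H x / f x) powr p * \<bar>u' x\<bar> powr p))"
    (is "?L \<le> p powr p * ?R")
proof -
  have cont_abs_u': "continuous_on {s..y} (\<lambda>x. \<bar>u' x\<bar>)"
    by (intro continuous_intros cont_u')
  have cont_u: "continuous_on {s..y} u"
    by (rule DERIV_continuous_on[OF u_deriv])
  \<comment> \<open>The offset \<open>e\<close> keeps the majorant of \<open>\<bar>u - u s\<bar>\<close> positive,
    so that its \<open>p\<close>-th power is differentiable.\<close>
  have bound: "?L \<le> p powr p * ?R + p * H s * e powr p" if "e > 0" for e
  proof -
    define G where "G x = e + integral {s..x} (\<lambda>t. \<bar>u' t\<bar>)" for x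
    have G_deriv: "(G has_real_derivative \<bar>u' x\<bar>) (at x within {s..y})" if "x \<in> {s..y}" for x
      using integral_has_vector_derivative[OF cont_abs_u' that] unfolding G_def
      by (auto intro!: derivative_eq_intros simp: has_real_derivative_iff_has_vector_derivative)
    have le_G: "\<bar>u x - u s\<bar> \<le> G x" and G_pos: "0 < G x" if x: "x \<in> {s..y}" for x
    proof -
      have "\<bar>u x - u s\<bar> \<le> integral {s..x} (\<lambda>t. \<bar>u' t\<bar>)"
        using x by (intro abs_diff_le_integral_abs_deriv continuous_on_subset[OF cont_u']
            has_field_derivative_subset[OF u_deriv]) auto
      then show "\<bar>u x - u s\<bar> \<le> G x" "0 < G x"
        using \<open>e > 0\<close> by (auto simp: G_def)
    qed
    have "?L \<le> integral {s..y} (\<lambda>x. f x * G x powr p)"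
    proof (rule integral_le)
      show "(\<lambda>x. f x * \<bar>u x - u s\<bar> powr p) integrable_on {s..y}"
        using p by (intro integrable_continuous_interval continuous_intros cont_f cont_u continuous_on_powr') auto
      have "continuous_on {s..y} G"
        by (rule DERIV_continuous_on[OF G_deriv])
      then show "(\<lambda>x. f x * G x powr p) integrable_on {s..y}"
        using p G_pos
        by (intro integrable_continuous_interval continuous_intros cont_f continuous_on_powr')
          (auto, force)
    next
      fix x
      assume "x \<in> {s..y}"
      then show "f x * \<bar>u x - u s\<bar> powr p \<le> f x * G x powr p"
        using le_G[of x] f_pos[of x] p by (simp add: mult_left_mono powr_mono2)
    qed
    also have "\<dots> \<le> p powr p * ?R + p * H s * G s powr p"
      by (rule Hardy_Icc_offset[OF \<open>s \<le> y\<close> p cont_f f_pos H_deriv H_nonneg G_deriv G_pos _ cont_abs_u']) auto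
    finally show ?thesis
      by (simp add: G_def)
  qed
  show ?thesis
  proof (rule field_le_epsilon)
    fix d :: real
    assume "0 < d"
    define e where "e = (d / (p * H s + 1)) powr (1 / p)"
    have "0 \<le> H s"
      using H_nonneg \<open>s \<le> y\<close> by simp
    then have "0 \<le> p * H s"
      using p by simp
    then have "p * H s * e powr p = p * H s * d / (p * H s + 1)"
      using \<open>0 < d\<close> p by (simp add: e_def powr_powr)
    also have "\<dots> \<le> d"
      using \<open>0 < d\<close> \<open>0 \<le> p * H s\<close> by (simp add: divide_le_eq algebra_simps)
    moreover have "0 < e"
      using \<open>0 < d\<close> \<open>0 \<le> p * H s\<close> by (simp add: e_def)
    ultimately show "?L \<le> p powr p * ?R + d"
      using bound by fastforce
  qed
qed

lemma Hardy_Icc_nn_integral: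
  fixes f H u u' :: "real \<Rightarrow> real" and s y p :: real
  assumes "s \<le> y" and p: "1 \<le> p"
    and cont_f: "continuous_on {s..y} f" and f_pos: "\<And>x. x \<in> {s..y} \<Longrightarrow> 0 < f x"
    and H_deriv: "\<And>x. x \<in> {s..y} \<Longrightarrow> (H has_real_derivative - f x) (at x within {s..y})"
    and H_nonneg: "\<And>x. x \<in> {s..y} \<Longrightarrow> 0 \<le> H x"
    and u_deriv: "\<And>x. x \<in> {s..y} \<Longrightarrow> (u has_real_derivative u' x) (at x within {s..y})"
    and cont_u': "continuous_on {s..y} u'"
  shows "(\<integral>\<^sup>+x. ennreal (f x * \<bar>u x - u s\<bar> powr p) * indicator {s..y} x \<partial>lborel)
         \<le> ennreal (p powr p) *
           (\<integral>\<^sup>+x. ennreal (f x * ((H x / f x) powr p * \<bar>u' x\<bar> powr p)) * indicator {s<..<y} x \<partial>lborel)"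
proof -
  define P where "P x = f x * \<bar>u x - u s\<bar> powr p" for x
  define Q where "Q x = f x * ((H x / f x) powr p * \<bar>u' x\<bar> powr p)" for x
  have cont_u: "continuous_on {s..y} u"
    by (rule DERIV_continuous_on[OF u_deriv])
  have cont_H: "continuous_on {s..y} H"
    by (rule DERIV_continuous_on[OF H_deriv])
  have cont_P: "continuous_on {s..y} P"
    unfolding P_def using p by (intro continuous_intros continuous_on_powr' cont_f cont_u) auto
  have cont_Q: "continuous_on {s..y} Q"
    unfolding Q_def using p
    by (intro continuous_on_Hardy_weight continuous_intros cont_f f_pos cont_H H_nonneg cont_u') auto
  have P_nonneg: "0 \<le> P x" and Q_nonneg: "0 \<le> Q x" if "x \<in> {s..y}" for x
    using f_pos[OF that] H_nonneg[OF that] by (simp_all add: P_def Q_def)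
  have "(\<integral>\<^sup>+x. ennreal (P x) * indicator {s..y} x \<partial>lborel) = ennreal (integral {s..y} P)"
    using P_nonneg cont_P
    by (intro nn_integral_has_integral_lebesgue' integrable_integral integrable_continuous_interval) auto
  moreover have "(\<integral>\<^sup>+x. ennreal (Q x) * indicator {s<..<y} x \<partial>lborel) = ennreal (integral {s..y} Q)"
  proof (rule nn_integral_has_integral_lebesgue')
    show "(Q has_integral integral {s..y} Q) {s<..<y}"
      unfolding has_integral_Icc_iff_Ioo[symmetric]
      by (intro integrable_integral integrable_continuous_interval cont_Q)
  qed (use Q_nonneg in auto)
  moreover have "integral {s..y} P \<le> p powr p * integral {s..y} Q"
    unfolding P_def Q_def by (rule Hardy_Icc[OF assms])
  moreover have "0 \<le> integral {s..y} Q"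
    using Q_nonneg by (intro integral_nonneg integrable_continuous_interval cont_Q) auto
  ultimately show ?thesis
    unfolding P_def Q_def by (simp add: ennreal_mult[symmetric] ennreal_leI)
qed

section \<open>Half-lines\<close>

lemma Icc_subset_einterval:
  assumes "c \<in> einterval a b" and "d \<in> einterval a b"
  shows "{c..d} \<subseteq> einterval a b"
proof
  fix x
  assume "x \<in> {c..d}"
  then have "ereal c \<le> ereal x" "ereal x \<le> ereal d"
    by auto
  with assms show "x \<in> einterval a b"
    unfolding einterval_iff by (meson less_le_trans le_less_trans)
qed

lemma borel_measurable_ennreal_indicator:
  fixes g :: "'a::topological_space \<Rightarrow> real"
  assumes "g \<in> borel_measurable (restrict_space borel S)" and "S \<in> sets borel"
  shows "(\<lambda>x. ennreal (g x) * indicator S x) \<in> borel_measurable borel"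
proof -
  have "(\<lambda>x. ennreal (g x)) \<in> borel_measurable (restrict_space borel S)"
    using assms(1) by measurable
  then show ?thesis
    using assms(2) by (simp add: borel_measurable_restrict_space_iff_ennreal)
qed

lemma nn_integral_indicator_le_of_incseq_cover:
  fixes g :: "'a \<Rightarrow> ennreal"
  assumes meas: "(\<lambda>x. g x * indicator T x) \<in> borel_measurable M"
    and S: "\<And>n. S n \<in> sets M" "incseq S" "\<And>n. S n \<subseteq> T" "T \<subseteq> (\<Union>n. S n)"
    and bound: "\<And>n. (\<integral>\<^sup>+x. g x * indicator (S n) x \<partial>M) \<le> C"
  shows "(\<integral>\<^sup>+x. g x * indicator T x \<partial>M) \<le> C"
proof -
  have "(\<integral>\<^sup>+x. g x * indicator T x \<partial>M)
      \<le> (\<integral>\<^sup>+x. (SUP n. g x * indicator T x * indicator (S n) x) \<partial>M)"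
  proof (rule nn_integral_mono)
    fix x
    show "g x * indicator T x \<le> (SUP n. g x * indicator T x * indicator (S n) x)"
    proof (cases "x \<in> T")
      case True
      then obtain n where "x \<in> S n"
        using S(4) by blast
      then show ?thesis
        by (intro SUP_upper2[of n]) auto
    qed simp
  qed
  also have "\<dots> = (SUP n. \<integral>\<^sup>+x. g x * indicator T x * indicator (S n) x \<partial>M)"
    using S(1,2) meas
    by (intro nn_integral_monotone_convergence_SUP)
      (auto simp: incseq_def le_fun_def intro!: mult_left_mono split: split_indicator dest: monoD)
  also have "\<dots> = (SUP n. \<integral>\<^sup>+x. g x * indicator (S n) x \<partial>M)"
    using S(3) by (intro SUP_cong nn_integral_cong) (auto split: split_indicator)
  also have "\<dots> \<le> C"
    by (intro SUP_least bound)
  finally show ?thesis .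
qed

lemma nn_integral_einterval_atLeast_le:
  fixes g :: "real \<Rightarrow> ennreal" and s :: real
  assumes s: "s \<in> einterval a b"
    and meas: "(\<lambda>x. g x * indicator (einterval a b \<inter> {s..}) x) \<in> borel_measurable lborel"
    and bound: "\<And>y. y \<in> einterval a b \<Longrightarrow> s \<le> y \<Longrightarrow>
      (\<integral>\<^sup>+x. g x * indicator {s..y} x \<partial>lborel) \<le> C"
  shows "(\<integral>\<^sup>+x. g x * indicator (einterval a b \<inter> {s..}) x \<partial>lborel) \<le> C"
proof -
  obtain y :: "nat \<Rightarrow> real" where y: "incseq y" "\<And>n. ereal s < y n" "\<And>n. y n < b" "y \<longlonglongrightarrow> b"
    using ereal_incseq_approx[of s b] s by (auto simp: einterval_iff)
  have y_mem: "y n \<in> einterval a b" and s_le: "s \<le> y n" for n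
    using s y(2,3)[of n] by (auto simp: einterval_iff intro: less_trans)
  show ?thesis
  proof (rule nn_integral_indicator_le_of_incseq_cover[OF meas])
    show "incseq (\<lambda>n. {s..y n})"
      using y(1) by (auto simp: incseq_def intro: order_trans)
    show "{s..y n} \<subseteq> einterval a b \<inter> {s..}" for n
      using Icc_subset_einterval[OF s y_mem] by auto
    show "einterval a b \<inter> {s..} \<subseteq> (\<Union>n. {s..y n})"
    proof
      fix x
      assume "x \<in> einterval a b \<inter> {s..}"
      then have "s \<le> x" "ereal x < b"
        by (auto simp: einterval_iff)
      moreover obtain n where "ereal x < y n"
        using order_tendstoD(1)[OF y(4) \<open>ereal x < b\<close>] by (auto simp: eventually_sequentially)
      ultimately have "x \<in> {s..y n}"
        by simp
      then show "x \<in> (\<Union>n. {s..y n})"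
        by blast
    qed
  qed (auto intro: bound y_mem s_le)
qed

lemma Hardy_half_line_right:
  fixes f H u u' :: "real \<Rightarrow> real" and a b :: ereal and s p :: real
  assumes p: "1 \<le> p" and s: "s \<in> einterval a b"
    and cont_f: "continuous_on (einterval a b) f" and f_pos: "\<And>x. x \<in> einterval a b \<Longrightarrow> 0 < f x"
    and H_deriv: "\<And>x. x \<in> einterval a b \<Longrightarrow> (H has_real_derivative - f x) (at x)"
    and H_nonneg: "\<And>x. x \<in> einterval a b \<Longrightarrow> s \<le> x \<Longrightarrow> 0 \<le> H x"
    and u_deriv: "\<And>x. x \<in> einterval a b \<Longrightarrow> (u has_real_derivative u' x) (at x)"
    and cont_u': "continuous_on (einterval a b) u'"
  shows "(\<integral>\<^sup>+x. ennreal (f x * \<bar>u x - u s\<bar> powr p) * indicator (einterval a b \<inter> {s..}) x \<partial>lborel)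
         \<le> ennreal (p powr p) * (\<integral>\<^sup>+x. ennreal (f x * ((H x / f x) powr p * \<bar>u' x\<bar> powr p))
                                      * indicator (einterval a b \<inter> {s<..}) x \<partial>lborel)"
proof (rule nn_integral_einterval_atLeast_le[OF s])
  let ?I = "einterval a b"
  have cont_u: "continuous_on ?I u"
    using u_deriv by (meson DERIV_continuous_on has_field_derivative_at_within)
  show "(\<lambda>x. ennreal (f x * \<bar>u x - u s\<bar> powr p) * indicator (?I \<inter> {s..}) x) \<in> borel_measurable lborel"
    unfolding measurable_lborel2 using p
    by (intro borel_measurable_ennreal_indicator borel_measurable_continuous_on_restrict
        continuous_intros continuous_on_powr' continuous_on_subset[OF cont_f]
        continuous_on_subset[OF cont_u]) auto
  fix y
  assume y: "y \<in> ?I" "s \<le> y"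
  have Icc_subset: "{s..y} \<subseteq> ?I"
    by (rule Icc_subset_einterval[OF s y(1)])
  have "(\<integral>\<^sup>+x. ennreal (f x * \<bar>u x - u s\<bar> powr p) * indicator {s..y} x \<partial>lborel)
      \<le> ennreal (p powr p) * (\<integral>\<^sup>+x. ennreal (f x * ((H x / f x) powr p * \<bar>u' x\<bar> powr p))
                                   * indicator {s<..<y} x \<partial>lborel)"
  proof (rule Hardy_Icc_nn_integral[OF y(2) p])
    show "continuous_on {s..y} f" "continuous_on {s..y} u'"
      using Icc_subset by (auto intro: continuous_on_subset cont_f cont_u')
    fix x
    assume x: "x \<in> {s..y}"
    then have "x \<in> ?I"
      using Icc_subset by blast
    then show "0 < f x" "0 \<le> H x"
      "(H has_real_derivative - f x) (at x within {s..y})"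
      "(u has_real_derivative u' x) (at x within {s..y})"
      using x by (auto intro: has_field_derivative_at_within f_pos H_nonneg H_deriv u_deriv)
  qed
  also have "\<dots> \<le> ennreal (p powr p) * (\<integral>\<^sup>+x. ennreal (f x * ((H x / f x) powr p * \<bar>u' x\<bar> powr p))
                                   * indicator (?I \<inter> {s<..}) x \<partial>lborel)"
    using Icc_subset by (intro mult_left_mono nn_integral_mono) (auto split: split_indicator)
  finally show "(\<integral>\<^sup>+x. ennreal (f x * \<bar>u x - u s\<bar> powr p) * indicator {s..y} x \<partial>lborel)
      \<le> ennreal (p powr p) * (\<integral>\<^sup>+x. ennreal (f x * ((H x / f x) powr p * \<bar>u' x\<bar> powr p))
                                   * indicator (?I \<inter> {s<..}) x \<partial>lborel)" .
qed

lemma Hardy_half_line_left: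
  fixes f H u u' :: "real \<Rightarrow> real" and a b :: ereal and s p :: real
  assumes p: "1 \<le> p" and s: "s \<in> einterval a b"
    and cont_f: "continuous_on (einterval a b) f" and f_pos: "\<And>x. x \<in> einterval a b \<Longrightarrow> 0 < f x"
    and H_deriv: "\<And>x. x \<in> einterval a b \<Longrightarrow> (H has_real_derivative f x) (at x)"
    and H_nonneg: "\<And>x. x \<in> einterval a b \<Longrightarrow> x \<le> s \<Longrightarrow> 0 \<le> H x"
    and u_deriv: "\<And>x. x \<in> einterval a b \<Longrightarrow> (u has_real_derivative u' x) (at x)"
    and cont_u': "continuous_on (einterval a b) u'"
  shows "(\<integral>\<^sup>+x. ennreal (f x * \<bar>u x - u s\<bar> powr p) * indicator (einterval a b \<inter> {..s}) x \<partial>lborel)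
         \<le> ennreal (p powr p) * (\<integral>\<^sup>+x. ennreal (f x * ((H x / f x) powr p * \<bar>u' x\<bar> powr p))
                                      * indicator (einterval a b \<inter> {..<s}) x \<partial>lborel)"
proof -
  let ?I = "einterval a b" and ?J = "einterval (- b) (- a)"
  have J_iff: "x \<in> ?J \<longleftrightarrow> - x \<in> ?I" for x
    unfolding einterval_iff
    by (metis ereal_less_uminus_reorder ereal_uminus_less_reorder uminus_ereal.simps(1))
  have reflect: "(\<integral>\<^sup>+x. g (- x) \<partial>lborel) = (\<integral>\<^sup>+x. g x \<partial>lborel)"
    if "g \<in> borel_measurable borel" for g :: "real \<Rightarrow> ennreal"
    using nn_integral_real_affine[OF that, of "- 1" 0] by simp
  have cont_u: "continuous_on ?I u"
    using u_deriv by (meson DERIV_continuous_on has_field_derivative_at_within)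
  have cont_H: "continuous_on ?I H"
    using H_deriv by (meson DERIV_continuous_on has_field_derivative_at_within)
  have cont_reflect: "continuous_on ?J (\<lambda>x. g (- x))" if "continuous_on ?I g" for g :: "real \<Rightarrow> real"
    by (rule continuous_on_compose2[OF that]) (auto intro: continuous_on_minus continuous_on_id simp: J_iff)
  have deriv_reflect: "((\<lambda>x. g (- x)) has_real_derivative - g' (- x)) (at x)"
    if "(g has_real_derivative g' (- x)) (at (- x))" for g g' x
    using DERIV_chain2[OF that DERIV_minus[OF DERIV_ident]] by simp
  have meas_P: "(\<lambda>x. ennreal (f x * \<bar>u x - u s\<bar> powr p) * indicator (?I \<inter> {..s}) x)
      \<in> borel_measurable borel"
    using p
    by (intro borel_measurable_ennreal_indicator borel_measurable_continuous_on_restrict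
        continuous_intros continuous_on_powr' continuous_on_subset[OF cont_f]
        continuous_on_subset[OF cont_u]) auto
  have meas_Q: "(\<lambda>x. ennreal (f x * ((H x / f x) powr p * \<bar>u' x\<bar> powr p)) * indicator (?I \<inter> {..<s}) x)
      \<in> borel_measurable borel"
    using p H_nonneg
    by (intro borel_measurable_ennreal_indicator borel_measurable_continuous_on_restrict
        continuous_on_Hardy_weight continuous_intros continuous_on_subset[OF cont_f]
        continuous_on_subset[OF cont_H] continuous_on_subset[OF cont_u'] f_pos) auto
  have "(\<integral>\<^sup>+x. ennreal (f x * \<bar>u x - u s\<bar> powr p) * indicator (?I \<inter> {..s}) x \<partial>lborel)
      = (\<integral>\<^sup>+x. ennreal (f (- x) * \<bar>u (- x) - u (- (- s))\<bar> powr p) * indicator (?J \<inter> {- s..}) x \<partial>lborel)"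
    unfolding reflect[OF meas_P, symmetric]
    by (auto simp: J_iff intro!: nn_integral_cong split: split_indicator)
  also have "\<dots> \<le> ennreal (p powr p) *
      (\<integral>\<^sup>+x. ennreal (f (- x) * ((H (- x) / f (- x)) powr p * \<bar>- u' (- x)\<bar> powr p))
             * indicator (?J \<inter> {- s<..}) x \<partial>lborel)"
    using s p f_pos H_nonneg
    by (intro Hardy_half_line_right cont_reflect cont_f continuous_intros cont_u'
        deriv_reflect H_deriv u_deriv) (auto simp: J_iff)
  also have "(\<integral>\<^sup>+x. ennreal (f (- x) * ((H (- x) / f (- x)) powr p * \<bar>- u' (- x)\<bar> powr p))
             * indicator (?J \<inter> {- s<..}) x \<partial>lborel)
      = (\<integral>\<^sup>+x. ennreal (f x * ((H x / f x) powr p * \<bar>u' x\<bar> powr p)) * indicator (?I \<inter> {..<s}) x \<partial>lborel)"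
    unfolding reflect[OF meas_Q, symmetric]
    by (auto simp: J_iff intro!: nn_integral_cong split: split_indicator)
  finally show ?thesis .
qed

section \<open>Densities on an open interval\<close>

lemma einterval_obtain_Icc:
  assumes "x \<in> einterval a b"
  obtains c d where "c < x" "x < d" "{c..d} \<subseteq> einterval a b"
proof -
  obtain c d where "a < ereal c" "ereal c < ereal x" "ereal x < ereal d" "ereal d < b"
    using assms ereal_dense2 by (metis einterval_iff)
  moreover from this assms have "c \<in> einterval a b" "d \<in> einterval a b"
    unfolding einterval_iff by (meson less_trans)+
  ultimately show thesis
    by (intro that[of c d] Icc_subset_einterval) auto
qed

lemma continuous_on_einterval_if_Icc:
  assumes "\<And>c d. c \<in> einterval a b \<Longrightarrow> d \<in> einterval a b \<Longrightarrow> continuous_on {c..d} f"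
  shows "continuous_on (einterval a b) f"
proof -
  have "isCont f x" if x: "x \<in> einterval a b" for x
  proof -
    obtain c d where cd: "c < x" "x < d" "{c..d} \<subseteq> einterval a b"
      using einterval_obtain_Icc[OF x] .
    then have "c \<in> {c..d}" "d \<in> {c..d}"
      by auto
    with cd(3) have "continuous_on {c..d} f"
      using assms by blast
    with cd(1,2) show ?thesis
      by (intro continuous_on_interior[of "{c..d}"]) auto
  qed
  then show ?thesis
    by (simp add: continuous_at_imp_continuous_on)
qed

lemma abs_cont_on_imp_continuous_on:
  assumes "abs_cont_on f {c..d}"
  shows "continuous_on {c..d} f"
proof -
  have "uniformly_continuous_on {c..d} f"
    unfolding uniformly_continuous_on_def
  proof (intro allI impI)
    fix e :: real
    assume "0 < e"
    then obtain \<delta> where "\<delta> > 0" and small: "\<forall>(n::nat) (l::nat \<Rightarrow> real) (r::nat \<Rightarrow> real).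
        (\<forall>k<n. l k \<le> r k \<and> {l k..r k} \<subseteq> {c..d}) \<and>
        (\<forall>j<n. \<forall>k<n. j \<noteq> k \<longrightarrow> r j \<le> l k \<or> r k \<le> l j) \<and> (\<Sum>k<n. r k - l k) < \<delta>
        \<longrightarrow> (\<Sum>k<n. \<bar>f (r k) - f (l k)\<bar>) < e"
      using assms unfolding abs_cont_on_def by blast
    \<comment> \<open>A single subinterval \<open>[min x x', max x x']\<close> suffices.\<close>
    show "\<exists>\<delta>>0. \<forall>x\<in>{c..d}. \<forall>x'\<in>{c..d}. dist x' x < \<delta> \<longrightarrow> dist (f x') (f x) < e"
    proof (intro exI[of _ \<delta>] conjI ballI impI \<open>\<delta> > 0\<close>)
      fix x x'
      assume "x \<in> {c..d}" "x' \<in> {c..d}" "dist x' x < \<delta>"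
      then have "\<bar>f (max x x') - f (min x x')\<bar> < e"
        using small[rule_format, of 1 "\<lambda>_. min x x'" "\<lambda>_. max x x'"]
        by (auto simp: dist_real_def lessThan_Suc max_def min_def split: if_splits)
      then show "dist (f x') (f x) < e"
        by (auto simp: dist_real_def max_def min_def abs_minus_commute split: if_splits)
    qed
  qed
  then show ?thesis
    by (rule uniformly_continuous_imp_continuous)
qed

lemma smooth_on_has_real_derivative:
  assumes "smooth_on \<phi> S" and "x \<in> S"
  shows "(\<phi> has_real_derivative deriv \<phi> x) (at x)"
  using assms unfolding smooth_on_def
  by (metis DERIV_deriv_iff_real_differentiable funpow_0)

lemma smooth_on_continuous_on_deriv:
  assumes "smooth_on \<phi> S"
  shows "continuous_on S (deriv \<phi>)"
proof -
  have "\<forall>x\<in>S. (deriv ^^ 1) \<phi> differentiable (at x)"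
    using assms unfolding smooth_on_def by blast
  then have "deriv \<phi> differentiable (at x)" if "x \<in> S" for x
    using that by simp
  then show ?thesis
    by (intro continuous_at_imp_continuous_on ballI differentiable_imp_continuous_within)
qed

locale interval_density =
  fixes a b :: ereal and f :: "real \<Rightarrow> real"
  assumes f_pos: "\<And>x. x \<in> einterval a b \<Longrightarrow> 0 < f x"
    and f_eq_0: "\<And>x. x \<notin> einterval a b \<Longrightarrow> f x = 0"
    and continuous_on_f: "continuous_on (einterval a b) f"
    and nn_integral_f: "(\<integral>\<^sup>+x. ennreal (f x) \<partial>lborel) = 1"
begin

lemma f_nonneg: "0 \<le> f x"
  using f_pos f_eq_0 by (cases "x \<in> einterval a b") (auto simp: less_imp_le)

lemma borel_measurable_f[measurable]: "f \<in> borel_measurable borel"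
proof -
  have "(\<lambda>x. indicator (einterval a b) x *\<^sub>R f x) \<in> borel_measurable borel"
    by (intro borel_measurable_continuous_on_indicator continuous_on_f) simp
  also have "(\<lambda>x. indicator (einterval a b) x *\<^sub>R f x) = f"
    using f_eq_0 by (auto simp: fun_eq_iff split: split_indicator)
  finally show ?thesis .
qed

lemma integrable_f: "integrable lborel f"
  using nn_integral_f f_nonneg by (intro integrableI_bounded) auto

lemma cdf_of_eq_add_integral:
  assumes "c \<le> x"
  shows "cdf_of a f x = cdf_of a f c + integral {c..x} f"
proof -
  have integrable: "interval_lebesgue_integrable lborel u v f" for u v
    unfolding interval_lebesgue_integrable_def set_integrable_def
    using integrable_mult_indicator[OF _ integrable_f] by simp
  have "cdf_of a f x = cdf_of a f c + (LBINT t=ereal c..ereal x. f t)"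
    unfolding cdf_of_def by (rule interval_integral_sum[OF integrable, symmetric])
  also have "(LBINT t=ereal c..ereal x. f t) = integral {c..x} f"
    using assms integrable_mult_indicator[OF _ integrable_f]
    by (intro interval_integral_eq_integral) (auto simp: set_integrable_def)
  finally show ?thesis .
qed

lemma has_real_derivative_cdf_of:
  assumes "x \<in> einterval a b"
  shows "(cdf_of a f has_real_derivative f x) (at x)"
proof -
  obtain c d where cd: "c < x" "x < d" "{c..d} \<subseteq> einterval a b"
    using einterval_obtain_Icc[OF assms] .
  have "((\<lambda>t. cdf_of a f c + integral {c..t} f) has_real_derivative f x) (at x within {c..d})"
    using integral_has_vector_derivative[OF continuous_on_subset[OF continuous_on_f cd(3)], of x] cd
    by (auto simp: has_real_derivative_iff_has_vector_derivative intro!: derivative_eq_intros)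
  then have "((\<lambda>t. cdf_of a f c + integral {c..t} f) has_real_derivative f x) (at x)"
    using cd by (simp add: at_within_Icc_at)
  then show ?thesis
    by (rule has_field_derivative_transform_within_open[of _ _ _ "{c<..<d}"])
      (use cd in \<open>auto intro: cdf_of_eq_add_integral[symmetric]\<close>)
qed

lemma continuous_on_cdf_of: "continuous_on (einterval a b) (cdf_of a f)"
  using has_real_derivative_cdf_of
  by (meson DERIV_continuous_on has_field_derivative_at_within)

lemma cdf_of_bounds:
  assumes "a \<le> ereal x"
  shows "0 \<le> cdf_of a f x" and "cdf_of a f x \<le> 1"
proof -
  have cdf: "cdf_of a f x = (\<integral>t. indicator (einterval a x) t * f t \<partial>lborel)"
    unfolding cdf_of_def interval_lebesgue_integral_le_eq[OF assms] set_lebesgue_integral_def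
    by simp
  show "0 \<le> cdf_of a f x"
    unfolding cdf using f_nonneg by (intro Bochner_Integration.integral_nonneg) auto
  have "(\<integral>t. indicator (einterval a x) t * f t \<partial>lborel) \<le> (\<integral>t. f t \<partial>lborel)"
    using integrable_f f_nonneg
    by (intro integral_mono integrable_mult_indicator[of _ _ f, simplified]) (auto split: split_indicator)
  also have "(\<integral>t. f t \<partial>lborel) = 1"
    using nn_integral_eq_integral[OF integrable_f] nn_integral_f f_nonneg by simp
  finally show "cdf_of a f x \<le> 1"
    unfolding cdf .
qed

lemma borel_measurable_K_weight:
  "K_weight a f s \<in> borel_measurable (restrict_space borel (einterval a b))"
proof -
  have [measurable]: "cdf_of a f \<in> borel_measurable (restrict_space borel (einterval a b))"
    by (rule borel_measurable_continuous_on_restrict[OF continuous_on_cdf_of])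
  have [measurable]: "(\<lambda>x. x) \<in> borel_measurable (restrict_space borel (einterval a b))"
    by (rule measurable_restrict_space1) simp
  show ?thesis
    unfolding K_weight_def[abs_def] by measurable
qed

context
  fixes u u' :: "real \<Rightarrow> real" and s p :: real
  assumes p: "1 \<le> p" and s: "s \<in> einterval a b"
    and u_deriv: "\<And>x. x \<in> einterval a b \<Longrightarrow> (u has_real_derivative u' x) (at x)"
    and cont_u': "continuous_on (einterval a b) u'"
begin

lemma Hardy_K_weight_left:
  "(\<integral>\<^sup>+x. ennreal (f x * \<bar>u x - u s\<bar> powr p) * indicator (einterval a b \<inter> {..s}) x \<partial>lborel)
   \<le> ennreal (p powr p) * (\<integral>\<^sup>+x. ennreal (f x * (K_weight a f s x powr p * \<bar>u' x\<bar> powr p))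
                                * indicator (einterval a b \<inter> {..<s}) x \<partial>lborel)"
proof -
  let ?I = "einterval a b" and ?F = "cdf_of a f"
  have "(\<integral>\<^sup>+x. ennreal (f x * \<bar>u x - u s\<bar> powr p) * indicator (?I \<inter> {..s}) x \<partial>lborel)
      \<le> ennreal (p powr p) * (\<integral>\<^sup>+x. ennreal (f x * ((?F x / f x) powr p * \<bar>u' x\<bar> powr p))
                                   * indicator (?I \<inter> {..<s}) x \<partial>lborel)"
    using cdf_of_bounds(1)
    by (intro Hardy_half_line_left p s continuous_on_f f_pos has_real_derivative_cdf_of u_deriv cont_u')
      (auto simp: einterval_iff less_imp_le)
  also have "(\<integral>\<^sup>+x. ennreal (f x * ((?F x / f x) powr p * \<bar>u' x\<bar> powr p))
                   * indicator (?I \<inter> {..<s}) x \<partial>lborel)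
      = (\<integral>\<^sup>+x. ennreal (f x * (K_weight a f s x powr p * \<bar>u' x\<bar> powr p))
               * indicator (?I \<inter> {..<s}) x \<partial>lborel)"
    by (intro nn_integral_cong) (auto simp: K_weight_def split: split_indicator)
  finally show ?thesis .
qed

lemma Hardy_K_weight_right:
  "(\<integral>\<^sup>+x. ennreal (f x * \<bar>u x - u s\<bar> powr p) * indicator (einterval a b \<inter> {s..}) x \<partial>lborel)
   \<le> ennreal (p powr p) * (\<integral>\<^sup>+x. ennreal (f x * (K_weight a f s x powr p * \<bar>u' x\<bar> powr p))
                                * indicator (einterval a b \<inter> {s<..}) x \<partial>lborel)"
proof -
  let ?I = "einterval a b" and ?F = "cdf_of a f"
  have "((\<lambda>x. 1 - ?F x) has_real_derivative - f x) (at x)" if "x \<in> ?I" for x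
    using DERIV_diff[OF DERIV_const has_real_derivative_cdf_of[OF that]] by simp
  then have "(\<integral>\<^sup>+x. ennreal (f x * \<bar>u x - u s\<bar> powr p) * indicator (?I \<inter> {s..}) x \<partial>lborel)
      \<le> ennreal (p powr p) * (\<integral>\<^sup>+x. ennreal (f x * (((1 - ?F x) / f x) powr p * \<bar>u' x\<bar> powr p))
                                   * indicator (?I \<inter> {s<..}) x \<partial>lborel)"
    using cdf_of_bounds(2)
    by (intro Hardy_half_line_right p s continuous_on_f f_pos u_deriv cont_u')
      (auto simp: einterval_iff less_imp_le)
  also have "(\<integral>\<^sup>+x. ennreal (f x * (((1 - ?F x) / f x) powr p * \<bar>u' x\<bar> powr p))
                   * indicator (?I \<inter> {s<..}) x \<partial>lborel)
      = (\<integral>\<^sup>+x. ennreal (f x * (K_weight a f s x powr p * \<bar>u' x\<bar> powr p))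
               * indicator (?I \<inter> {s<..}) x \<partial>lborel)"
    by (intro nn_integral_cong) (auto simp: K_weight_def split: split_indicator)
  finally show ?thesis .
qed

lemma Hardy_K_weight:
  "(\<integral>\<^sup>+x. ennreal (f x * \<bar>u x - u s\<bar> powr p) * indicator (einterval a b) x \<partial>lborel)
   \<le> ennreal (p powr p) * (\<integral>\<^sup>+x. ennreal (f x * (K_weight a f s x powr p * \<bar>u' x\<bar> powr p))
                                * indicator (einterval a b) x \<partial>lborel)"
proof -
  let ?I = "einterval a b"
  define P where "P x = ennreal (f x * \<bar>u x - u s\<bar> powr p)" for x
  define Q where "Q x = ennreal (f x * (K_weight a f s x powr p * \<bar>u' x\<bar> powr p))" for x
  have cont_u: "continuous_on ?I u"
    using u_deriv by (meson DERIV_continuous_on has_field_derivative_at_within)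
  have [measurable]: "(\<lambda>x. P x * indicator ?I x) \<in> borel_measurable borel"
    unfolding P_def using p
    by (intro borel_measurable_ennreal_indicator borel_measurable_continuous_on_restrict
        continuous_intros continuous_on_powr' continuous_on_f cont_u) auto
  have [measurable]: "f \<in> borel_measurable (restrict_space borel ?I)"
    "K_weight a f s \<in> borel_measurable (restrict_space borel ?I)"
    "u' \<in> borel_measurable (restrict_space borel ?I)"
    using borel_measurable_K_weight borel_measurable_continuous_on_restrict[OF cont_u']
    by (auto intro: measurable_restrict_space1)
  then have [measurable]: "(\<lambda>x. Q x * indicator ?I x) \<in> borel_measurable borel"
    unfolding Q_def by (intro borel_measurable_ennreal_indicator) auto
  have "(\<integral>\<^sup>+x. P x * indicator ?I x \<partial>lborel)
      \<le> (\<integral>\<^sup>+x. P x * indicator ?I x * indicator {..s} x + P x * indicator ?I x * indicator {s..} x \<partial>lborel)"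
    by (intro nn_integral_mono) (auto split: split_indicator)
  also have "\<dots> = (\<integral>\<^sup>+x. P x * indicator (?I \<inter> {..s}) x \<partial>lborel)
                 + (\<integral>\<^sup>+x. P x * indicator (?I \<inter> {s..}) x \<partial>lborel)"
    by (subst nn_integral_add) (measurable, simp add: indicator_inter_arith mult.assoc)
  also have "\<dots> \<le> ennreal (p powr p) * ((\<integral>\<^sup>+x. Q x * indicator (?I \<inter> {..<s}) x \<partial>lborel)
                                      + (\<integral>\<^sup>+x. Q x * indicator (?I \<inter> {s<..}) x \<partial>lborel))"
    unfolding distrib_left P_def Q_def by (rule add_mono[OF Hardy_K_weight_left Hardy_K_weight_right])
  also have "(\<integral>\<^sup>+x. Q x * indicator (?I \<inter> {..<s}) x \<partial>lborel) + (\<integral>\<^sup>+x. Q x * indicator (?I \<inter> {s<..}) x \<partial>lborel)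
      = (\<integral>\<^sup>+x. Q x * indicator ?I x * indicator {..<s} x + Q x * indicator ?I x * indicator {s<..} x \<partial>lborel)"
    by (subst nn_integral_add) (measurable, simp add: indicator_inter_arith mult.assoc)
  also have "\<dots> \<le> (\<integral>\<^sup>+x. Q x * indicator ?I x \<partial>lborel)"
    by (intro nn_integral_mono) (auto split: split_indicator)
  finally show ?thesis
    unfolding P_def Q_def by (simp add: mult_left_mono)
qed

end

end

section \<open>Centering and change of variables\<close>

lemma convex_combination_powr_le:
  fixes p t x y :: real
  assumes p: "1 \<le> p" and t: "0 \<le> t" "t \<le> 1" and xy: "0 \<le> x" "0 \<le> y"
  shows "((1 - t) * x + t * y) powr p \<le> (1 - t) * x powr p + t * y powr p"
proof -
  have scale: "(t * y) powr p \<le> t * y powr p" if "0 \<le> t" "t \<le> 1" "0 \<le> y" for t y :: real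
  proof -
    have "t powr p \<le> t powr 1"
      using that p by (intro powr_mono') auto
    then show ?thesis
      using that by (simp add: powr_mult mult_right_mono)
  qed
  show ?thesis
  proof (cases "x = 0 \<or> y = 0")
    case True
    then show ?thesis
      using scale[of t y] scale[of "1 - t" x] t xy p by auto
  next
    case False
    then show ?thesis
      using convex_onD[OF powr_convex[OF p], of t x y] t xy by simp
  qed
qed

lemma convex_on_abs_powr:
  fixes p :: real
  assumes p: "1 \<le> p"
  shows "convex_on UNIV (\<lambda>x::real. \<bar>x\<bar> powr p)"
proof (rule convex_onI)
  fix t x y :: real
  assume t: "0 < t" "t < 1"
  have "\<bar>(1 - t) *\<^sub>R x + t *\<^sub>R y\<bar> \<le> (1 - t) * \<bar>x\<bar> + t * \<bar>y\<bar>"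
    using t by (simp add: abs_mult order_trans[OF abs_triangle_ineq])
  then have "\<bar>(1 - t) *\<^sub>R x + t *\<^sub>R y\<bar> powr p \<le> ((1 - t) * \<bar>x\<bar> + t * \<bar>y\<bar>) powr p"
    using p by (intro powr_mono2) auto
  also have "\<dots> \<le> (1 - t) * \<bar>x\<bar> powr p + t * \<bar>y\<bar> powr p"
    using t p by (intro convex_combination_powr_le) auto
  finally show "\<bar>(1 - t) *\<^sub>R x + t *\<^sub>R y\<bar> powr p \<le> (1 - t) * \<bar>x\<bar> powr p + t * \<bar>y\<bar> powr p" .
qed auto

lemma abs_add_powr_le:
  fixes p u v :: real
  assumes p: "1 \<le> p"
  shows "\<bar>u + v\<bar> powr p \<le> 2 powr (p - 1) * (\<bar>u\<bar> powr p + \<bar>v\<bar> powr p)"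
proof -
  have "\<bar>u + v\<bar> powr p \<le> (1/2) * (2 powr p * \<bar>u\<bar> powr p) + (1/2) * (2 powr p * \<bar>v\<bar> powr p)"
    using convex_onD[OF convex_on_abs_powr[OF p], of "1/2" "2 * u" "2 * v"]
    by (simp add: abs_mult powr_mult algebra_simps)
  also have "\<dots> = 2 powr (p - 1) * (\<bar>u\<bar> powr p + \<bar>v\<bar> powr p)"
    by (simp add: powr_diff field_simps)
  finally show ?thesis .
qed

lemma (in finite_measure) integrable_if_nn_integral_abs_powr_finite:
  fixes Z :: "'a \<Rightarrow> real"
  assumes [measurable]: "Z \<in> borel_measurable M" and p: "1 \<le> p"
    and fin: "(\<integral>\<^sup>+\<omega>. ennreal (\<bar>Z \<omega>\<bar> powr p) \<partial>M) < \<infinity>"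
  shows "integrable M Z" and "integrable M (\<lambda>\<omega>. \<bar>Z \<omega>\<bar> powr p)"
proof -
  show int_p: "integrable M (\<lambda>\<omega>. \<bar>Z \<omega>\<bar> powr p)"
    using fin by (intro integrableI_bounded) auto
  have "\<bar>Z \<omega>\<bar> \<le> 1 + \<bar>Z \<omega>\<bar> powr p" for \<omega>
  proof (cases "\<bar>Z \<omega>\<bar> \<le> 1")
    case False
    then have "\<bar>Z \<omega>\<bar> powr 1 \<le> \<bar>Z \<omega>\<bar> powr p"
      using p by (intro powr_mono) auto
    then show ?thesis
      using False by simp
  qed (simp add: add_increasing2)
  then show "integrable M Z"
    by (intro Bochner_Integration.integrable_bound[OF Bochner_Integration.integrable_add[OF integrable_const[of 1] int_p]])
      auto
qed

lemma (in prob_space) nn_integral_abs_sub_expectation_powr_le_abs_powr: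
  fixes Z :: "'a \<Rightarrow> real"
  assumes [measurable]: "Z \<in> borel_measurable M" and p: "1 \<le> p"
    and fin: "(\<integral>\<^sup>+\<omega>. ennreal (\<bar>Z \<omega>\<bar> powr p) \<partial>M) < \<infinity>"
  shows "(\<integral>\<^sup>+\<omega>. ennreal (\<bar>Z \<omega> - expectation Z\<bar> powr p) \<partial>M)
         \<le> ennreal (2 powr p) * (\<integral>\<^sup>+\<omega>. ennreal (\<bar>Z \<omega>\<bar> powr p) \<partial>M)"
proof -
  note int = integrable_if_nn_integral_abs_powr_finite[OF assms]
  define m where "m = expectation Z"
  have jensen: "\<bar>m\<bar> powr p \<le> expectation (\<lambda>\<omega>. \<bar>Z \<omega>\<bar> powr p)"
    unfolding m_def using jensens_inequality[OF int(1) _ _ int(2) convex_on_abs_powr[OF p]] by simp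
  have "(\<integral>\<^sup>+\<omega>. ennreal (\<bar>Z \<omega> - m\<bar> powr p) \<partial>M)
      \<le> (\<integral>\<^sup>+\<omega>. ennreal (2 powr (p - 1) * (\<bar>Z \<omega>\<bar> powr p + \<bar>m\<bar> powr p)) \<partial>M)"
    using abs_add_powr_le[OF p, of "Z _" "- m"] by (intro nn_integral_mono ennreal_leI) simp
  also have "\<dots> = ennreal (2 powr (p - 1) * (expectation (\<lambda>\<omega>. \<bar>Z \<omega>\<bar> powr p) + \<bar>m\<bar> powr p))"
    using int(2) by (subst nn_integral_eq_integral) (auto simp: prob_space)
  also have "\<dots> \<le> ennreal (2 powr p * expectation (\<lambda>\<omega>. \<bar>Z \<omega>\<bar> powr p))"
    using jensen by (intro ennreal_leI) (simp add: powr_diff)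
  also have "\<dots> = ennreal (2 powr p) * (\<integral>\<^sup>+\<omega>. ennreal (\<bar>Z \<omega>\<bar> powr p) \<partial>M)"
    using int(2) by (simp add: ennreal_mult nn_integral_eq_integral)
  finally show ?thesis
    by (simp add: m_def)
qed

lemma (in prob_space) nn_integral_abs_sub_expectation_powr_le:
  fixes Y :: "'a \<Rightarrow> real" and c p :: real
  assumes [measurable]: "Y \<in> borel_measurable M" and p: "1 \<le> p"
  shows "(\<integral>\<^sup>+\<omega>. ennreal (\<bar>Y \<omega> - expectation Y\<bar> powr p) \<partial>M)
         \<le> ennreal (2 powr p) * (\<integral>\<^sup>+\<omega>. ennreal (\<bar>Y \<omega> - c\<bar> powr p) \<partial>M)"
proof (cases "(\<integral>\<^sup>+\<omega>. ennreal (\<bar>Y \<omega> - c\<bar> powr p) \<partial>M) < \<infinity>")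
  case True
  then have "integrable M (\<lambda>\<omega>. Y \<omega> - c)"
    using p by (intro integrable_if_nn_integral_abs_powr_finite) auto
  moreover have "integrable M Y"
    using Bochner_Integration.integrable_add[OF calculation integrable_const[of c]] by simp
  ultimately have "expectation (\<lambda>\<omega>. Y \<omega> - c) = expectation Y - c"
    by (simp add: prob_space)
  then show ?thesis
    using nn_integral_abs_sub_expectation_powr_le_abs_powr[of "\<lambda>\<omega>. Y \<omega> - c", OF _ p True] by simp
next
  case False
  then show ?thesis
    by (simp add: less_top[symmetric] ennreal_mult_top)
qed

lemma nn_integral_distributed_indicator:
  fixes X :: "'a \<Rightarrow> real" and f g :: "real \<Rightarrow> real"
  assumes dist: "distributed M lborel X (\<lambda>x. ennreal (f x))" and f_nonneg: "\<And>x. 0 \<le> f x"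
    and f_eq_0: "\<And>x. x \<notin> S \<Longrightarrow> f x = 0" and S: "S \<in> sets borel"
    and g: "g \<in> borel_measurable (restrict_space borel S)"
  shows "(\<integral>\<^sup>+\<omega>. ennreal (g (X \<omega>)) \<partial>M) = (\<integral>\<^sup>+x. ennreal (f x * g x) * indicator S x \<partial>lborel)"
proof -
  have [measurable]: "X \<in> borel_measurable M"
    using distributed_measurable[OF dist] by simp
  have meas: "(\<lambda>x. ennreal (g x) * indicator S x) \<in> borel_measurable lborel"
    using borel_measurable_ennreal_indicator[OF g S] by simp
  have "emeasure M (X -` (- S) \<inter> space M) = (\<integral>\<^sup>+x. ennreal (f x) * indicator (- S) x \<partial>lborel)"
    using S by (intro distributed_emeasure[OF dist]) auto
  also have "(\<lambda>x. ennreal (f x) * indicator (- S) x) = (\<lambda>x. 0)"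
    using f_eq_0 by (auto simp: fun_eq_iff split: split_indicator)
  finally have "AE \<omega> in M. X \<omega> \<in> S"
    using S by (intro AE_I[where N="X -` (- S) \<inter> space M"]) auto
  then have "(\<integral>\<^sup>+\<omega>. ennreal (g (X \<omega>)) \<partial>M) = (\<integral>\<^sup>+\<omega>. ennreal (g (X \<omega>)) * indicator S (X \<omega>) \<partial>M)"
    by (intro nn_integral_cong_AE) auto
  also have "\<dots> = (\<integral>\<^sup>+x. ennreal (f x) * (ennreal (g x) * indicator S x) \<partial>lborel)"
    by (rule distributed_nn_integral[OF dist meas, symmetric])
  also have "\<dots> = (\<integral>\<^sup>+x. ennreal (f x * g x) * indicator S x \<partial>lborel)"
    by (simp add: ennreal_mult' f_nonneg mult.assoc)
  finally show ?thesis .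
qed

section \<open>A weighted Poincare inequality\<close>

lemma interval_density_if_distributed:
  fixes f :: "real \<Rightarrow> real" and X :: "'a \<Rightarrow> real"
  assumes "prob_space M" and "distributed M lborel X (\<lambda>x. ennreal (f x))"
    and "\<And>x. x \<in> einterval a b \<Longrightarrow> 0 < f x" and "\<And>x. x \<notin> einterval a b \<Longrightarrow> f x = 0"
    and "\<And>c d. a < ereal c \<Longrightarrow> ereal d < b \<Longrightarrow> abs_cont_on f {c..d}"
  shows "interval_density a b f"
proof
  show "continuous_on (einterval a b) f"
    using assms(5)
    by (intro continuous_on_einterval_if_Icc) (auto simp: einterval_iff intro: abs_cont_on_imp_continuous_on)
  show "(\<integral>\<^sup>+x. ennreal (f x) \<partial>lborel) = 1"
    using distributed_emeasure[OF assms(2), of UNIV] prob_space.emeasure_space_1[OF assms(1)] by simp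
qed (use assms(3,4) in auto)

lemma (in interval_density) nn_integral_abs_sub_expectation_powr_le_K_weight:
  fixes M :: "'a measure" and X :: "'a \<Rightarrow> real" and \<phi> :: "real \<Rightarrow> real" and s p :: real
  assumes "prob_space M" and dist: "distributed M lborel X (\<lambda>x. ennreal (f x))"
    and p: "1 \<le> p" and s: "s \<in> einterval a b" and smooth: "smooth_on \<phi> (einterval a b)"
    and "(\<lambda>\<omega>. \<phi> (X \<omega>)) \<in> borel_measurable M"
  shows "(\<integral>\<^sup>+\<omega>. ennreal (\<bar>\<phi> (X \<omega>) - (\<integral>\<omega>'. \<phi> (X \<omega>') \<partial>M)\<bar> powr p) \<partial>M)
         \<le> ennreal ((2 * p) powr p) *
           (\<integral>\<^sup>+\<omega>. ennreal (K_weight a f s (X \<omega>) powr p * \<bar>deriv \<phi> (X \<omega>)\<bar> powr p) \<partial>M)"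
proof -
  interpret M: prob_space M
    by fact
  let ?I = "einterval a b"
  have [measurable]: "deriv \<phi> \<in> borel_measurable (restrict_space borel ?I)"
    "K_weight a f s \<in> borel_measurable (restrict_space borel ?I)"
    using borel_measurable_continuous_on_restrict[OF smooth_on_continuous_on_deriv[OF smooth]]
      borel_measurable_K_weight by auto
  have "continuous_on ?I \<phi>"
    using smooth_on_has_real_derivative[OF smooth]
    by (meson DERIV_continuous_on has_field_derivative_at_within)
  then have [measurable]: "\<phi> \<in> borel_measurable (restrict_space borel ?I)"
    by (rule borel_measurable_continuous_on_restrict)
  have "(\<integral>\<^sup>+\<omega>. ennreal (\<bar>\<phi> (X \<omega>) - (\<integral>\<omega>'. \<phi> (X \<omega>') \<partial>M)\<bar> powr p) \<partial>M)
      \<le> ennreal (2 powr p) * (\<integral>\<^sup>+\<omega>. ennreal (\<bar>\<phi> (X \<omega>) - \<phi> s\<bar> powr p) \<partial>M)"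
    by (rule M.nn_integral_abs_sub_expectation_powr_le[OF assms(6) p])
  also have "(\<integral>\<^sup>+\<omega>. ennreal (\<bar>\<phi> (X \<omega>) - \<phi> s\<bar> powr p) \<partial>M)
      = (\<integral>\<^sup>+x. ennreal (f x * \<bar>\<phi> x - \<phi> s\<bar> powr p) * indicator ?I x \<partial>lborel)"
    by (intro nn_integral_distributed_indicator[OF dist f_nonneg f_eq_0]) auto
  also have "\<dots> \<le> ennreal (p powr p) *
      (\<integral>\<^sup>+x. ennreal (f x * (K_weight a f s x powr p * \<bar>deriv \<phi> x\<bar> powr p)) * indicator ?I x \<partial>lborel)"
    using smooth_on_has_real_derivative[OF smooth] smooth_on_continuous_on_deriv[OF smooth]
    by (rule Hardy_K_weight[OF p s])
  also have "(\<integral>\<^sup>+x. ennreal (f x * (K_weight a f s x powr p * \<bar>deriv \<phi> x\<bar> powr p)) * indicator ?I x \<partial>lborel)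
      = (\<integral>\<^sup>+\<omega>. ennreal (K_weight a f s (X \<omega>) powr p * \<bar>deriv \<phi> (X \<omega>)\<bar> powr p) \<partial>M)"
    by (intro nn_integral_distributed_indicator[OF dist f_nonneg f_eq_0, symmetric]) auto
  finally show ?thesis
    using p by (simp add: powr_mult ennreal_mult mult.assoc mult_left_mono)
qed

theorem theorem4p1:
  fixes M :: "'a measure" and X :: "'a \<Rightarrow> real" and f :: "real \<Rightarrow> real"
    and a b :: ereal and xbar p :: real and \<phi> :: "real \<Rightarrow> real"
  assumes "prob_space M"
    and "a < b"
    and "distributed M lborel X (\<lambda>x. ennreal (f x))"
    and "\<forall>x. a < ereal x \<and> ereal x < b \<longrightarrow> f x > 0"
    and "\<forall>x. \<not> (a < ereal x \<and> ereal x < b) \<longrightarrow> f x = 0"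
    and "\<forall>c d. a < ereal c \<and> ereal d < b \<longrightarrow> abs_cont_on f {c..d}"
    and "a < ereal xbar" and "ereal xbar < b" and "cdf_of a f xbar = 1/2"
    and "1 \<le> p"
    and "smooth_on \<phi> {x. a < ereal x \<and> ereal x < b}"
    and "(\<lambda>\<omega>. \<phi> (X \<omega>)) \<in> borel_measurable M"
    and "(\<integral>\<^sup>+\<omega>. ennreal (\<bar>\<phi> (X \<omega>)\<bar> powr p) \<partial>M) < \<infinity>"
  shows "(\<integral>\<^sup>+\<omega>. ennreal (\<bar>\<phi> (X \<omega>) - (\<integral>\<omega>'. \<phi> (X \<omega>') \<partial>M)\<bar> powr p) \<partial>M)
         \<le> ennreal ((2 * p) powr p) *
           (\<integral>\<^sup>+\<omega>. ennreal (K_weight a f xbar (X \<omega>) powr p * \<bar>deriv \<phi> (X \<omega>)\<bar> powr p) \<partial>M)"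
proof -
  have I: "{x. a < ereal x \<and> ereal x < b} = einterval a b"
    by (simp add: einterval_def)
  have "interval_density a b f"
    using assms(1,3-6) by (intro interval_density_if_distributed) (auto simp: einterval_iff)
  then show ?thesis
    using assms(1,3,7,8,10,12) assms(11)[unfolded I]
    by (intro interval_density.nn_integral_abs_sub_expectation_powr_le_K_weight)
      (auto simp: einterval_iff)
qed

end
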